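(* In a hierarchical tensor factorization with mode tree $\mathcal T$ and end tensor $\mathcal W_H$, let $\nu\in\mathrm{int}(\mathcal T)$ and $r\in[R_\nu]$, and let $\overline{\mathcal W}_H^{(\nu,r)}$ be the end tensor obtained by setting the $r$'th row of $W^{(\nu)}$ and the $r$'th columns of $W^{(\nu_c)}$, $\nu_c\in C(\nu)$, to zero (all other entries unchanged). Then $$\|\mathcal W_H-\overline{\mathcal W}_H^{(\nu,r)}\|\le\sigma_{\nu,r}\cdot\prod_{\nu'\in\mathcal T\setminus(\{\nu\}\cup C(\nu))}\|W^{(\nu')}\|.$$
   Context: Fix $N\in\mathbb N$, $D_1,\dots,D_N\in\mathbb N$; $[K]:=\{1,\dots,K\}$; norms are Frobenius norms; $\otimes$ the tensor product. A mode tree $\mathcal T$ over $[N]$ is a rooted tree whose nodes are labeled by subsets of $[N]$, with exactly $N$ leaves labeled $\{1\},\dots,\{N\}$, and where each interior node's label is the union of its children's labels; nodes are identified with labels, root $[N]$, $\mathrm{int}(\mathcal T)$ interior nodes, $Pa(\nu)$ parent, $C(\nu)$ children (fixed order). A hierarchical tensor factorization has $R_\nu\in\mathbb N$ ($\nu\in\mathrm{int}(\mathcal T)$), $R_{Pa([N])}:=1$, $R_{\{n\}}:=D_n$, weight matrices $W^{(\nu)}\in\mathbb R^{R_\nu\times R_{Pa(\nu)}}$. Intermediate tensors: $\mathcal W^{(\{n\},r)}:=W^{(\{n\})}_{:,r}$; for $\nu\in\mathrm{int}(\mathcal T)\setminus\{[N]\}$ (leaves to root), $r\in[R_{Pa(\nu)}]$: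 $\mathcal W^{(\nu,r)}:=\pi_\nu\big(\sum_{r'=1}^{R_\nu}W^{(\nu)}_{r',r}\bigotimes_{\nu_c\in C(\nu)}\mathcal W^{(\nu_c,r')}\big)$; end tensor $\mathcal W_H:=\pi_{[N]}\big(\sum_{r'=1}^{R_{[N]}}W^{([N])}_{r',1}\bigotimes_{\nu_c\in C([N])}\mathcal W^{(\nu_c,r')}\big)$, where $\pi_\nu$ permutes modes (ordered by children, each child's elements ascending) into ascending order of the elements of $\nu$. $\sigma_{\nu,r}:=\|W^{(\nu)}_{r,:}\|\prod_{\nu_c\in C(\nu)}\|W^{(\nu_c)}_{:,r}\|$ is the norm of the $(\nu,r)$'th local component. *)

theory Defs
  imports Complex_Main "HOL-Library.FuncSet"
begin

text \<open>Since nodes are identified with their labels, a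
  mode tree is the laminar family of its node labels: it contains [N] and all singletons
  {n}, every label is a nonempty subset of [N], and any two labels are nested or
  disjoint.  Children of a node are the maximal proper sub-labels, the parent is the
  minimal proper super-label; leaves are exactly the singleton labels.\<close>

definition mode_tree :: "nat \<Rightarrow> nat set set \<Rightarrow> bool" where
  "mode_tree N T \<longleftrightarrow>
     {1..N} \<in> T \<and> (\<forall>n\<in>{1..N}. {n} \<in> T) \<and>
     (\<forall>\<nu>\<in>T. \<nu> \<noteq> {} \<and> \<nu> \<subseteq> {1..N}) \<and>
     (\<forall>\<nu>\<in>T. \<forall>\<mu>\<in>T. \<nu> \<subseteq> \<mu> \<or> \<mu> \<subseteq> \<nu> \<or> \<nu> \<inter> \<mu> = {})"

definition children :: "nat set set \<Rightarrow> nat set \<Rightarrow> nat set set" where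
  "children T \<nu> = {c\<in>T. c \<subset> \<nu> \<and> \<not> (\<exists>\<mu>\<in>T. c \<subset> \<mu> \<and> \<mu> \<subset> \<nu>)}"

definition parent :: "nat set set \<Rightarrow> nat set \<Rightarrow> nat set" where
  "parent T \<nu> = (THE \<mu>. \<mu> \<in> T \<and> \<nu> \<subset> \<mu> \<and> (\<forall>\<mu>'\<in>T. \<nu> \<subset> \<mu>' \<longrightarrow> \<mu> \<subseteq> \<mu>'))"

definition interior :: "nat set set \<Rightarrow> nat set \<Rightarrow> bool" where
  "interior T \<nu> \<longleftrightarrow> \<nu> \<in> T \<and> \<not> is_singleton \<nu>"

text \<open>Dimensions of the weight matrices (indices are 0-based: rows 0..<rows, columns
  0..<cols).\<close>

definition rows :: "(nat \<Rightarrow> nat) \<Rightarrow> (nat set \<Rightarrow> nat) \<Rightarrow> nat set \<Rightarrow> nat" where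
  "rows D R \<nu> = (if is_singleton \<nu> then D (the_elem \<nu>) else R \<nu>)"

definition cols :: "nat \<Rightarrow> nat set set \<Rightarrow> (nat \<Rightarrow> nat) \<Rightarrow> (nat set \<Rightarrow> nat) \<Rightarrow> nat set \<Rightarrow> nat" where
  "cols N T D R \<nu> = (if \<nu> = {1..N} then 1 else rows D R (parent T \<nu>))"

text \<open>Tensors are represented by their entries as functions of a multi-index
  i :: nat \<Rightarrow> nat, where i n is the index of mode n.  The intermediate tensor of (\<nu>,r)
  only depends on i n for n \<in> \<nu>; the tensor product over children (which have
  disjoint mode sets) is the pointwise product, and the mode permutation \<pi>_\<nu> is
  implicit because modes are addressed by their labels.  The recursion is driven by a
  fuel argument (card \<nu> suffices).\<close>

fun ht :: "nat \<Rightarrow> nat set set \<Rightarrow> (nat set \<Rightarrow> nat) \<Rightarrow> (nat set \<Rightarrow> nat \<Rightarrow> nat \<Rightarrow> real)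
             \<Rightarrow> nat set \<Rightarrow> nat \<Rightarrow> (nat \<Rightarrow> nat) \<Rightarrow> real" where
  "ht 0 T R W \<nu> r i = 0"
| "ht (Suc k) T R W \<nu> r i =
     (if is_singleton \<nu> then W \<nu> (i (the_elem \<nu>)) r
      else (\<Sum>r'<R \<nu>. W \<nu> r' r * (\<Prod>c\<in>children T \<nu>. ht k T R W c r' i)))"

definition inter_tensor :: "nat set set \<Rightarrow> (nat set \<Rightarrow> nat) \<Rightarrow> (nat set \<Rightarrow> nat \<Rightarrow> nat \<Rightarrow> real)
             \<Rightarrow> nat set \<Rightarrow> nat \<Rightarrow> (nat \<Rightarrow> nat) \<Rightarrow> real" where
  "inter_tensor T R W \<nu> r = ht (card \<nu>) T R W \<nu> r"

definition end_tensor :: "nat \<Rightarrow> nat set set \<Rightarrow> (nat set \<Rightarrow> nat) \<Rightarrow> (nat set \<Rightarrow> nat \<Rightarrow> nat \<Rightarrow> real)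
             \<Rightarrow> (nat \<Rightarrow> nat) \<Rightarrow> real" where
  "end_tensor N T R W = inter_tensor T R W {1..N} 0"

definition tensor_norm :: "nat \<Rightarrow> (nat \<Rightarrow> nat) \<Rightarrow> ((nat \<Rightarrow> nat) \<Rightarrow> real) \<Rightarrow> real" where
  "tensor_norm N D X = sqrt (\<Sum>i\<in>PiE {1..N} (\<lambda>n. {..<D n}). (X i)\<^sup>2)"

definition mat_norm :: "nat \<Rightarrow> nat set set \<Rightarrow> (nat \<Rightarrow> nat) \<Rightarrow> (nat set \<Rightarrow> nat)
             \<Rightarrow> (nat set \<Rightarrow> nat \<Rightarrow> nat \<Rightarrow> real) \<Rightarrow> nat set \<Rightarrow> real" where
  "mat_norm N T D R W \<nu> =
     sqrt (\<Sum>a<rows D R \<nu>. \<Sum>b<cols N T D R \<nu>. (W \<nu> a b)\<^sup>2)"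

definition row_norm :: "nat \<Rightarrow> nat set set \<Rightarrow> (nat \<Rightarrow> nat) \<Rightarrow> (nat set \<Rightarrow> nat)
             \<Rightarrow> (nat set \<Rightarrow> nat \<Rightarrow> nat \<Rightarrow> real) \<Rightarrow> nat set \<Rightarrow> nat \<Rightarrow> real" where
  "row_norm N T D R W \<nu> a = sqrt (\<Sum>b<cols N T D R \<nu>. (W \<nu> a b)\<^sup>2)"

definition col_norm :: "(nat \<Rightarrow> nat) \<Rightarrow> (nat set \<Rightarrow> nat)
             \<Rightarrow> (nat set \<Rightarrow> nat \<Rightarrow> nat \<Rightarrow> real) \<Rightarrow> nat set \<Rightarrow> nat \<Rightarrow> real" where
  "col_norm D R W \<nu> b = sqrt (\<Sum>a<rows D R \<nu>. (W \<nu> a b)\<^sup>2)"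

definition local_norm :: "nat \<Rightarrow> nat set set \<Rightarrow> (nat \<Rightarrow> nat) \<Rightarrow> (nat set \<Rightarrow> nat)
             \<Rightarrow> (nat set \<Rightarrow> nat \<Rightarrow> nat \<Rightarrow> real) \<Rightarrow> nat set \<Rightarrow> nat \<Rightarrow> real" where
  "local_norm N T D R W \<nu> r =
     row_norm N T D R W \<nu> r * (\<Prod>c\<in>children T \<nu>. col_norm D R W c r)"

definition zero_component :: "nat set set \<Rightarrow> (nat set \<Rightarrow> nat \<Rightarrow> nat \<Rightarrow> real) \<Rightarrow> nat set \<Rightarrow> nat
             \<Rightarrow> (nat set \<Rightarrow> nat \<Rightarrow> nat \<Rightarrow> real)" where
  "zero_component T W \<nu> r = (\<lambda>\<mu> a b.
     if (\<mu> = \<nu> \<and> a = r) \<or> (\<mu> \<in> children T \<nu> \<and> b = r) then 0 else W \<mu> a b)"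

end

theory Submission
  imports Defs "HOL-Analysis.Convex"
begin

(* Zeroing the (\<nu>,r)'th component only changes the summand r' = r at \<nu>, and the end tensor is
  multilinear in the weights of the nodes on the path from \<nu> to the root. Hence W_H minus the
  truncated end tensor is itself the end tensor of the weights in which W^(\<nu>) keeps only its
  r'th row, the children of \<nu> keep only their r'th columns, and all other matrices are unchanged.
  For any weights, the norm of the end tensor is at most the product of the Frobenius norms of all
  weight matrices: at each node Cauchy-Schwarz over the summation index applies, and a tensor
  product over children, which act on disjoint modes, has norm equal to the product of the norms.
  For the truncated weights these norms are the row norm, the column norms and the unchanged
  norms, whose product is the right-hand side. *)

section \<open>Mode trees\<close>

lemma mode_tree_nodeD:
  assumes "mode_tree N T" "\<mu> \<in> T"
  shows "\<mu> \<noteq> {}" "\<mu> \<subseteq> {1..N}" "finite \<mu>"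
  using assms unfolding mode_tree_def by (auto dest: finite_subset)

lemma finite_mode_tree: "mode_tree N T \<Longrightarrow> finite T"
  by (rule finite_subset[of _ "Pow {1..N}"]) (auto simp: mode_tree_def)

lemma mode_tree_laminar:
  "mode_tree N T \<Longrightarrow> \<mu> \<in> T \<Longrightarrow> \<rho> \<in> T \<Longrightarrow> \<mu> \<subseteq> \<rho> \<or> \<rho> \<subseteq> \<mu> \<or> \<mu> \<inter> \<rho> = {}"
  unfolding mode_tree_def by blast

lemma childrenD: "c \<in> children T \<mu> \<Longrightarrow> c \<in> T \<and> c \<subset> \<mu>"
  unfolding children_def by auto

lemma children_maximal: "c \<in> children T \<mu> \<Longrightarrow> \<rho> \<in> T \<Longrightarrow> c \<subset> \<rho> \<Longrightarrow> \<not> \<rho> \<subset> \<mu>"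
  unfolding children_def by auto

lemma finite_children: "mode_tree N T \<Longrightarrow> finite (children T \<mu>)"
  using finite_mode_tree finite_subset[of "children T \<mu>" T] childrenD by blast

lemma children_disjoint:
  assumes "mode_tree N T" "c \<in> children T \<mu>" "c' \<in> children T \<mu>" "c \<noteq> c'"
  shows "c \<inter> c' = {}"
  using mode_tree_laminar[OF assms(1), of c c'] assms(2-4) childrenD children_maximal
  by (metis psubsetI)

lemma exists_child_above:
  assumes "mode_tree N T" "\<sigma> \<in> T" "\<sigma> \<subset> \<mu>"
  shows "\<exists>c\<in>children T \<mu>. \<sigma> \<subseteq> c"
proof -
  let ?between = "{\<rho>\<in>T. \<sigma> \<subseteq> \<rho> \<and> \<rho> \<subset> \<mu>}"
  have "finite ?between" using finite_mode_tree[OF assms(1)] by simp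
  then obtain c where "c \<in> ?between" and "\<forall>\<rho>\<in>?between. c \<subseteq> \<rho> \<longrightarrow> c = \<rho>"
    using finite_has_maximal2[of ?between \<sigma>] assms(2,3) by blast
  then have "c \<in> children T \<mu>" and "\<sigma> \<subseteq> c"
    unfolding children_def by (blast intro: order_trans)+
  then show ?thesis by blast
qed

lemma Union_children:
  assumes "mode_tree N T" "interior T \<mu>"
  shows "\<Union>(children T \<mu>) = \<mu>"
proof
  show "\<Union>(children T \<mu>) \<subseteq> \<mu>" using childrenD by blast
  show "\<mu> \<subseteq> \<Union>(children T \<mu>)"
  proof
    fix n assume n: "n \<in> \<mu>"
    have "\<mu> \<in> T" "\<mu> \<noteq> {n}" using assms(2) unfolding interior_def is_singleton_def by auto
    have "n \<in> {1..N}" using n mode_tree_nodeD(2)[OF assms(1) \<open>\<mu> \<in> T\<close>] by blast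
    then have "{n} \<in> T" using assms(1) unfolding mode_tree_def by blast
    moreover have "{n} \<subset> \<mu>" using n \<open>\<mu> \<noteq> {n}\<close> by blast
    ultimately show "n \<in> \<Union>(children T \<mu>)" using exists_child_above[OF assms(1)] by blast
  qed
qed

lemma parent_child:
  assumes "mode_tree N T" "\<mu> \<in> T" "c \<in> children T \<mu>"
  shows "parent T c = \<mu>"
  unfolding parent_def
proof (rule the_equality)
  have c: "c \<in> T" "c \<subset> \<mu>" "c \<noteq> {}" using childrenD[OF assms(3)] mode_tree_nodeD[OF assms(1)] by auto
  have "\<mu> \<subseteq> \<mu>'" if "\<mu>' \<in> T" "c \<subset> \<mu>'" for \<mu>'
    using mode_tree_laminar[OF assms(1,2) that(1)] children_maximal[OF assms(3) that] c that(2)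
    by blast
  then show "\<mu> \<in> T \<and> c \<subset> \<mu> \<and> (\<forall>\<mu>'\<in>T. c \<subset> \<mu>' \<longrightarrow> \<mu> \<subseteq> \<mu>')"
    using assms(2) c by blast
  then show "\<rho> \<in> T \<and> c \<subset> \<rho> \<and> (\<forall>\<mu>'\<in>T. c \<subset> \<mu>' \<longrightarrow> \<rho> \<subseteq> \<mu>') \<Longrightarrow> \<rho> = \<mu>" for \<rho>
    by blast
qed

lemma cols_child:
  assumes "mode_tree N T" "interior T \<mu>" "c \<in> children T \<mu>"
  shows "cols N T D R c = R \<mu>"
proof -
  have "c \<noteq> {1..N}"
    using childrenD[OF assms(3)] mode_tree_nodeD(2)[OF assms(1)] assms(2) unfolding interior_def by blast
  then show ?thesis
    using parent_child[OF assms(1) _ assms(3)] assms(2) by (simp add: cols_def rows_def interior_def)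
qed

definition subtree :: "nat set set \<Rightarrow> nat set \<Rightarrow> nat set set" where
  "subtree T \<mu> = {\<sigma>\<in>T. \<sigma> \<subseteq> \<mu>}"

lemma finite_subtree: "mode_tree N T \<Longrightarrow> finite (subtree T \<mu>)"
  using finite_mode_tree unfolding subtree_def by auto

lemma subtree_singleton:
  assumes "mode_tree N T" "\<mu> \<in> T" "is_singleton \<mu>"
  shows "subtree T \<mu> = {\<mu>}"
  using assms mode_tree_nodeD(1)[OF assms(1)]
  unfolding subtree_def is_singleton_def by blast

lemma proper_subtree_eq_Union_children:
  assumes "mode_tree N T"
  shows "subtree T \<mu> - {\<mu>} = (\<Union>c\<in>children T \<mu>. subtree T c)"
proof
  show "subtree T \<mu> - {\<mu>} \<subseteq> (\<Union>c\<in>children T \<mu>. subtree T c)"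
  proof
    fix \<sigma> assume "\<sigma> \<in> subtree T \<mu> - {\<mu>}"
    then have "\<sigma> \<in> T" "\<sigma> \<subset> \<mu>" unfolding subtree_def by auto
    then obtain c where "c \<in> children T \<mu>" "\<sigma> \<subseteq> c" using exists_child_above[OF assms] by blast
    then show "\<sigma> \<in> (\<Union>c\<in>children T \<mu>. subtree T c)" using \<open>\<sigma> \<in> T\<close> unfolding subtree_def by blast
  qed
  show "(\<Union>c\<in>children T \<mu>. subtree T c) \<subseteq> subtree T \<mu> - {\<mu>}"
    using childrenD unfolding subtree_def by blast
qed

lemma subtree_children_disjoint:
  assumes "mode_tree N T" "c \<in> children T \<mu>" "c' \<in> children T \<mu>" "c \<noteq> c'"
  shows "subtree T c \<inter> subtree T c' = {}"
proof -
  have "\<sigma> \<noteq> {}" if "\<sigma> \<in> T" for \<sigma> using mode_tree_nodeD(1)[OF assms(1) that] .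
  then show ?thesis using children_disjoint[OF assms] unfolding subtree_def by auto
qed

lemma ht_cong_index:
  "(\<And>n. n \<in> \<sigma> \<Longrightarrow> i n = i' n) \<Longrightarrow> ht k T R V \<sigma> b i = ht k T R V \<sigma> b i'"
proof (induction k arbitrary: \<sigma> b)
  case (Suc k)
  have "ht k T R V c a i = ht k T R V c a i'" if "c \<in> children T \<sigma>" for c a
    using Suc childrenD[OF that] by blast
  moreover have "is_singleton \<sigma> \<Longrightarrow> the_elem \<sigma> \<in> \<sigma>"
    by (auto simp: is_singleton_def)
  ultimately show ?case using Suc.prems by simp
qed simp

lemma ht_cong_weights:
  "\<sigma> \<in> T \<Longrightarrow> (\<And>\<rho>. \<rho> \<in> subtree T \<sigma> \<Longrightarrow> V \<rho> = V' \<rho>) \<Longrightarrow> ht k T R V \<sigma> b i = ht k T R V' \<sigma> b i"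
proof (induction k arbitrary: \<sigma> b)
  case (Suc k)
  have "ht k T R V c a i = ht k T R V' c a i" if "c \<in> children T \<sigma>" for c a
    using Suc.IH[of c] Suc.prems childrenD[OF that] unfolding subtree_def by blast
  moreover have "V \<sigma> = V' \<sigma>" using Suc.prems unfolding subtree_def by blast
  ultimately show ?case by simp
qed simp

lemma ht_cong_column:
  assumes "\<sigma> \<in> T" "\<And>a. V \<sigma> a b = V' \<sigma> a b" "\<And>\<rho>. \<rho> \<in> subtree T \<sigma> - {\<sigma>} \<Longrightarrow> V \<rho> = V' \<rho>"
  shows "ht k T R V \<sigma> b i = ht k T R V' \<sigma> b i"
proof (cases k)
  case (Suc k')
  have "ht k' T R V c a i = ht k' T R V' c a i" if "c \<in> children T \<sigma>" for c a
    using childrenD[OF that] assms(3) by (intro ht_cong_weights) (auto simp: subtree_def)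
  then show ?thesis using Suc assms(2) by simp
qed simp

section \<open>Sums over multi-indices\<close>

lemma sum_PiE_Un:
  fixes F :: "('a \<Rightarrow> 'b) \<Rightarrow> 'c::comm_monoid_add"
  assumes "I \<inter> J = {}"
  shows "(\<Sum>i\<in>PiE (I \<union> J) A. F i)
       = (\<Sum>(x, y)\<in>PiE I A \<times> PiE J A. F (\<lambda>n. if n \<in> I then x n else y n))"
proof (rule sum.reindex_bij_witness[of _ "\<lambda>(x, y) n. if n \<in> I then x n else y n"
        "\<lambda>i. (restrict i I, restrict i J)"])
  fix i assume "i \<in> PiE (I \<union> J) A"
  then have "(\<lambda>(x, y) n. if n \<in> I then x n else y n) (restrict i I, restrict i J) = i"
    by (auto simp: PiE_def extensional_def fun_eq_iff)
  then show "(\<lambda>(x, y) n. if n \<in> I then x n else y n) (restrict i I, restrict i J) = i"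
    and "(\<lambda>(x, y). F (\<lambda>n. if n \<in> I then x n else y n)) (restrict i I, restrict i J) = F i"
    by (simp_all add: case_prod_beta)
  show "(restrict i I, restrict i J) \<in> PiE I A \<times> PiE J A"
    using \<open>i \<in> PiE (I \<union> J) A\<close> by auto
next
  fix p assume "p \<in> PiE I A \<times> PiE J A"
  then obtain x y where p: "p = (x, y)" "x \<in> PiE I A" "y \<in> PiE J A" by blast
  have "restrict (\<lambda>n. if n \<in> I then x n else y n) I = x"
    using p(2) by (auto simp: PiE_def extensional_def)
  moreover have "restrict (\<lambda>n. if n \<in> I then x n else y n) J = y"
    using p(3) assms unfolding PiE_def extensional_def by (auto simp: fun_eq_iff)
  moreover have "(\<lambda>n. if n \<in> I then x n else y n) \<in> PiE (I \<union> J) A"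
    using p(2,3) by (auto simp: PiE_def extensional_def)
  ultimately show "(restrict ((\<lambda>(x, y) n. if n \<in> I then x n else y n) p) I,
      restrict ((\<lambda>(x, y) n. if n \<in> I then x n else y n) p) J) = p"
    and "(\<lambda>(x, y) n. if n \<in> I then x n else y n) p \<in> PiE (I \<union> J) A"
    using p(1) by simp_all
qed

lemma sum_PiE_Union_prod:
  fixes g :: "'a set \<Rightarrow> ('a \<Rightarrow> 'b) \<Rightarrow> 'c::comm_semiring_1"
  assumes "finite C" "pairwise disjnt C"
    and "\<And>c i i'. c \<in> C \<Longrightarrow> (\<And>n. n \<in> c \<Longrightarrow> i n = i' n) \<Longrightarrow> g c i = g c i'"
  shows "(\<Sum>i\<in>PiE (\<Union>C) A. \<Prod>c\<in>C. g c i) = (\<Prod>c\<in>C. \<Sum>i\<in>PiE c A. g c i)"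
  using assms
proof (induction C rule: finite_induct)
  case (insert c0 C)
  let ?glue = "\<lambda>x y n. if n \<in> c0 then x n else y n"
  have disj: "c0 \<inter> \<Union>C = {}"
    using insert.prems(1) insert.hyps(2) by (auto simp: pairwise_insert disjnt_def)
  have glue_c0: "g c0 (?glue x y) = g c0 x" for x y
    by (rule insert.prems(2)) auto
  have glue_C: "(\<Prod>c\<in>C. g c (?glue x y)) = (\<Prod>c\<in>C. g c y)" for x y
  proof (rule prod.cong[OF refl])
    fix c assume "c \<in> C"
    then have "n \<notin> c0" if "n \<in> c" for n using disj that by blast
    then show "g c (?glue x y) = g c y" using \<open>c \<in> C\<close> by (intro insert.prems(2)) auto
  qed
  have "(\<Sum>i\<in>PiE (\<Union>(insert c0 C)) A. \<Prod>c\<in>insert c0 C. g c i)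
      = (\<Sum>(x, y)\<in>PiE c0 A \<times> PiE (\<Union>C) A. g c0 (?glue x y) * (\<Prod>c\<in>C. g c (?glue x y)))"
    using insert.hyps sum_PiE_Un[OF disj] by simp
  also have "\<dots> = (\<Sum>x\<in>PiE c0 A. g c0 x) * (\<Sum>y\<in>PiE (\<Union>C) A. \<Prod>c\<in>C. g c y)"
    by (simp add: glue_c0 glue_C sum_product sum.cartesian_product)
  also have "(\<Sum>y\<in>PiE (\<Union>C) A. \<Prod>c\<in>C. g c y) = (\<Prod>c\<in>C. \<Sum>i\<in>PiE c A. g c i)"
  proof (rule insert.IH)
    show "pairwise disjnt C" using insert.prems(1) by (simp add: pairwise_insert)
    show "\<And>c i i'. c \<in> C \<Longrightarrow> (\<And>n. n \<in> c \<Longrightarrow> i n = i' n) \<Longrightarrow> g c i = g c i'"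
      using insert.prems(2) by blast
  qed
  finally show ?case using insert.hyps by simp
qed simp

lemma sum_PiE_singleton: "(\<Sum>i\<in>PiE {x} A. F (i x)) = (\<Sum>y\<in>A x. F y)"
  by (rule sum.reindex_bij_witness[of _ "\<lambda>y. \<lambda>n\<in>{x}. y" "\<lambda>i. i x"])
    (auto simp: PiE_def extensional_def fun_eq_iff)

lemma sum_prod_le_prod_sum:
  fixes X :: "'c \<Rightarrow> 'a \<Rightarrow> real"
  assumes "finite C" "C \<noteq> {}" "finite A" "\<And>c a. 0 \<le> X c a"
  shows "(\<Sum>a\<in>A. \<Prod>c\<in>C. X c a) \<le> (\<Prod>c\<in>C. \<Sum>a\<in>A. X c a)"
proof -
  obtain c0 where c0: "c0 \<in> C" using assms(2) by blast
  let ?Q = "\<Prod>c\<in>C - {c0}. \<Sum>a\<in>A. X c a"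
  have "(\<Sum>a\<in>A. \<Prod>c\<in>C. X c a) = (\<Sum>a\<in>A. X c0 a * (\<Prod>c\<in>C - {c0}. X c a))"
    by (intro sum.cong refl prod.remove[OF assms(1) c0])
  also have "\<dots> \<le> (\<Sum>a\<in>A. X c0 a * ?Q)"
    using assms(3,4) by (intro sum_mono mult_left_mono prod_mono) (auto intro: member_le_sum)
  also have "\<dots> = (\<Prod>c\<in>C. \<Sum>a\<in>A. X c a)"
    by (simp add: sum_distrib_right prod.remove[OF assms(1) c0])
  finally show ?thesis .
qed

section \<open>Norm of the end tensor\<close>

definition tensor_sqnorm :: "(nat \<Rightarrow> nat) \<Rightarrow> nat set \<Rightarrow> ((nat \<Rightarrow> nat) \<Rightarrow> real) \<Rightarrow> real" where
  "tensor_sqnorm D \<mu> X = (\<Sum>i\<in>PiE \<mu> (\<lambda>n. {..<D n}). (X i)\<^sup>2)"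

lemma tensor_sqnorm_nonneg: "0 \<le> tensor_sqnorm D \<mu> X"
  unfolding tensor_sqnorm_def by (simp add: sum_nonneg)

lemma tensor_sqnorm_prod:
  assumes "finite C" "pairwise disjnt C"
    and "\<And>c i i'. c \<in> C \<Longrightarrow> (\<And>n. n \<in> c \<Longrightarrow> i n = i' n) \<Longrightarrow> X c i = X c i'"
  shows "tensor_sqnorm D (\<Union>C) (\<lambda>i. \<Prod>c\<in>C. X c i) = (\<Prod>c\<in>C. tensor_sqnorm D c (X c))"
  unfolding tensor_sqnorm_def prod_power_distrib
  using assms(3) by (intro sum_PiE_Union_prod[OF assms(1,2)]) metis

lemma col_norm_sq: "(col_norm D R V \<sigma> b)\<^sup>2 = (\<Sum>a<rows D R \<sigma>. (V \<sigma> a b)\<^sup>2)"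
  unfolding col_norm_def by (simp add: sum_nonneg)

lemma mat_norm_sq_eq_sum_col_norm_sq:
  "(mat_norm N T D R V \<sigma>)\<^sup>2 = (\<Sum>b<cols N T D R \<sigma>. (col_norm D R V \<sigma> b)\<^sup>2)"
  unfolding mat_norm_def col_norm_sq by (simp add: sum_nonneg sum.swap[of _ "{..<cols N T D R \<sigma>}"])

lemma tensor_sqnorm_ht_Suc_le:
  assumes "mode_tree N T" "interior T \<mu>"
  shows "tensor_sqnorm D \<mu> (ht (Suc k) T R V \<mu> b)
     \<le> (\<Sum>a<R \<mu>. (V \<mu> a b)\<^sup>2) * (\<Prod>c\<in>children T \<mu>. \<Sum>a<R \<mu>. tensor_sqnorm D c (ht k T R V c a))"
proof -
  let ?C = "children T \<mu>"
  let ?P = "\<lambda>a i. \<Prod>c\<in>?C. ht k T R V c a i"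
  have C: "finite ?C" "\<Union>?C = \<mu>" "pairwise disjnt ?C"
    using finite_children[OF assms(1)] Union_children[OF assms] children_disjoint[OF assms(1)]
    by (auto simp: pairwise_def disjnt_def)
  have "?C \<noteq> {}"
    using C(2) mode_tree_nodeD(1)[OF assms(1)] assms(2) unfolding interior_def by force
  have tensor_sqnorm_P: "tensor_sqnorm D \<mu> (?P a) = (\<Prod>c\<in>?C. tensor_sqnorm D c (ht k T R V c a))" for a
    using tensor_sqnorm_prod[OF C(1,3), of "\<lambda>c. ht k T R V c a"] ht_cong_index unfolding C(2) by blast
  have "tensor_sqnorm D \<mu> (ht (Suc k) T R V \<mu> b)
      = (\<Sum>i\<in>PiE \<mu> (\<lambda>n. {..<D n}). (\<Sum>a<R \<mu>. V \<mu> a b * ?P a i)\<^sup>2)"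
    using assms(2) by (simp add: tensor_sqnorm_def interior_def)
  also have "\<dots> \<le> (\<Sum>i\<in>PiE \<mu> (\<lambda>n. {..<D n}). (\<Sum>a<R \<mu>. (V \<mu> a b)\<^sup>2) * (\<Sum>a<R \<mu>. (?P a i)\<^sup>2))"
    by (intro sum_mono Cauchy_Schwarz_ineq_sum)
  also have "\<dots> = (\<Sum>a<R \<mu>. (V \<mu> a b)\<^sup>2) * (\<Sum>a<R \<mu>. tensor_sqnorm D \<mu> (?P a))"
    by (simp add: tensor_sqnorm_def sum_distrib_left sum.swap[of _ "PiE \<mu> (\<lambda>n. {..<D n})"])
  also have "\<dots> \<le> (\<Sum>a<R \<mu>. (V \<mu> a b)\<^sup>2) * (\<Prod>c\<in>?C. \<Sum>a<R \<mu>. tensor_sqnorm D c (ht k T R V c a))"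
    unfolding tensor_sqnorm_P using C(1) \<open>?C \<noteq> {}\<close>
    by (intro mult_left_mono sum_prod_le_prod_sum) (auto simp: tensor_sqnorm_nonneg sum_nonneg)
  finally show ?thesis .
qed

lemma tensor_sqnorm_ht_le:
  assumes "mode_tree N T" "\<mu> \<in> T" "card \<mu> \<le> k"
  shows "tensor_sqnorm D \<mu> (ht k T R V \<mu> b)
     \<le> (col_norm D R V \<mu> b)\<^sup>2 * (\<Prod>\<sigma>\<in>subtree T \<mu> - {\<mu>}. (mat_norm N T D R V \<sigma>)\<^sup>2)"
  using assms(2,3)
proof (induction k arbitrary: \<mu> b)
  case 0
  then show ?case using mode_tree_nodeD[OF assms(1)] by simp
next
  case (Suc k)
  let ?M = "\<lambda>\<sigma>. (mat_norm N T D R V \<sigma>)\<^sup>2"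
  show ?case
  proof (cases "is_singleton \<mu>")
    case True
    then obtain x where x: "\<mu> = {x}" unfolding is_singleton_def by blast
    have "tensor_sqnorm D \<mu> (ht (Suc k) T R V \<mu> b) = (col_norm D R V \<mu> b)\<^sup>2"
      using sum_PiE_singleton[of "\<lambda>y. (V \<mu> y b)\<^sup>2" x]
      by (simp add: tensor_sqnorm_def col_norm_sq rows_def x)
    then show ?thesis using subtree_singleton[OF assms(1) Suc.prems(1) True] by (simp del: ht.simps)
  next
    case False
    let ?C = "children T \<mu>"
    have \<mu>: "interior T \<mu>" using Suc.prems(1) False by (simp add: interior_def)
    have child_le: "(\<Sum>a<R \<mu>. tensor_sqnorm D c (ht k T R V c a)) \<le> (\<Prod>\<sigma>\<in>subtree T c. ?M \<sigma>)"
      if c: "c \<in> ?C" for c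
    proof -
      have "c \<in> T" "c \<subset> \<mu>" using childrenD[OF c] by auto
      then have "card c < card \<mu>"
        using psubset_card_mono mode_tree_nodeD(3)[OF assms(1) Suc.prems(1)] by blast
      then have "card c \<le> k" using Suc.prems(2) by simp
      then have "(\<Sum>a<R \<mu>. tensor_sqnorm D c (ht k T R V c a))
          \<le> (\<Sum>a<cols N T D R c. (col_norm D R V c a)\<^sup>2 * (\<Prod>\<sigma>\<in>subtree T c - {c}. ?M \<sigma>))"
        unfolding cols_child[OF assms(1) \<mu> c] using \<open>c \<in> T\<close> by (intro sum_mono Suc.IH)
      also have "\<dots> = ?M c * (\<Prod>\<sigma>\<in>subtree T c - {c}. ?M \<sigma>)"
        by (simp add: mat_norm_sq_eq_sum_col_norm_sq sum_distrib_right)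
      also have "\<dots> = (\<Prod>\<sigma>\<in>subtree T c. ?M \<sigma>)"
        using \<open>c \<in> T\<close> prod.remove[OF finite_subtree[OF assms(1)], of c c ?M]
        by (simp add: subtree_def)
      finally show ?thesis .
    qed
    have "tensor_sqnorm D \<mu> (ht (Suc k) T R V \<mu> b)
        \<le> (\<Sum>a<R \<mu>. (V \<mu> a b)\<^sup>2) * (\<Prod>c\<in>?C. \<Sum>a<R \<mu>. tensor_sqnorm D c (ht k T R V c a))"
      by (rule tensor_sqnorm_ht_Suc_le[OF assms(1) \<mu>])
    also have "\<dots> \<le> (col_norm D R V \<mu> b)\<^sup>2 * (\<Prod>c\<in>?C. \<Prod>\<sigma>\<in>subtree T c. ?M \<sigma>)"
      unfolding col_norm_sq rows_def if_not_P[OF False] using child_le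
      by (intro mult_left_mono prod_mono) (auto simp: sum_nonneg tensor_sqnorm_nonneg)
    also have "(\<Prod>c\<in>?C. \<Prod>\<sigma>\<in>subtree T c. ?M \<sigma>) = (\<Prod>\<sigma>\<in>subtree T \<mu> - {\<mu>}. ?M \<sigma>)"
      unfolding proper_subtree_eq_Union_children[OF assms(1)]
      by (rule prod.UNION_disjoint[symmetric])
        (auto simp: finite_children[OF assms(1)] finite_subtree[OF assms(1)] subtree_children_disjoint[OF assms(1)])
    finally show ?thesis .
  qed
qed

lemma tensor_norm_end_tensor_le:
  assumes "mode_tree N T"
  shows "tensor_norm N D (end_tensor N T R V) \<le> (\<Prod>\<sigma>\<in>T. mat_norm N T D R V \<sigma>)"
proof -
  let ?root = "{1..N}"
  let ?M = "\<lambda>\<sigma>. (mat_norm N T D R V \<sigma>)\<^sup>2"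
  have root: "?root \<in> T" "subtree T ?root = T"
    using assms mode_tree_nodeD(2)[OF assms] unfolding mode_tree_def subtree_def by auto
  have "tensor_sqnorm D ?root (end_tensor N T R V)
      \<le> (col_norm D R V ?root 0)\<^sup>2 * (\<Prod>\<sigma>\<in>T - {?root}. ?M \<sigma>)"
    unfolding end_tensor_def inter_tensor_def
    using tensor_sqnorm_ht_le[OF assms root(1) order_refl] root(2) by simp
  also have "(col_norm D R V ?root 0)\<^sup>2 = ?M ?root"
    by (simp add: mat_norm_sq_eq_sum_col_norm_sq cols_def)
  also have "?M ?root * (\<Prod>\<sigma>\<in>T - {?root}. ?M \<sigma>) = (\<Prod>\<sigma>\<in>T. mat_norm N T D R V \<sigma>)\<^sup>2"
    using prod.remove[OF finite_mode_tree[OF assms] root(1), of ?M] by (simp add: prod_power_distrib)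
  finally have "sqrt (tensor_sqnorm D ?root (end_tensor N T R V)) \<le> \<bar>\<Prod>\<sigma>\<in>T. mat_norm N T D R V \<sigma>\<bar>"
    using real_sqrt_le_mono by fastforce
  moreover have "0 \<le> (\<Prod>\<sigma>\<in>T. mat_norm N T D R V \<sigma>)"
    unfolding mat_norm_def by (intro prod_nonneg) (simp add: sum_nonneg)
  ultimately show ?thesis by (simp add: tensor_norm_def tensor_sqnorm_def)
qed

section \<open>Removing a local component\<close>

definition component_weights :: "nat set set \<Rightarrow> (nat set \<Rightarrow> nat \<Rightarrow> nat \<Rightarrow> real) \<Rightarrow> nat set \<Rightarrow> nat
             \<Rightarrow> (nat set \<Rightarrow> nat \<Rightarrow> nat \<Rightarrow> real)" where
  "component_weights T W \<nu> r = (\<lambda>\<mu> a b.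
     if (\<mu> = \<nu> \<and> a \<noteq> r) \<or> (\<mu> \<in> children T \<nu> \<and> b \<noteq> r) then 0 else W \<mu> a b)"

lemma weights_away_from_component:
  assumes "\<rho> \<noteq> \<nu>" "\<rho> \<notin> children T \<nu>"
  shows "zero_component T W \<nu> r \<rho> = W \<rho>" "component_weights T W \<nu> r \<rho> = W \<rho>"
  using assms unfolding zero_component_def component_weights_def by (simp_all add: fun_eq_iff)

lemma ht_sub_zero_component_at_node:
  assumes "mode_tree N T" "interior T \<nu>"
  shows "ht (Suc k) T R W \<nu> b i - ht (Suc k) T R (zero_component T W \<nu> r) \<nu> b i
       = ht (Suc k) T R (component_weights T W \<nu> r) \<nu> b i"
proof -
  let ?C = "children T \<nu>"
  let ?W' = "zero_component T W \<nu> r"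
  let ?Wc = "component_weights T W \<nu> r"
  let ?term = "\<lambda>V a. V \<nu> a b * (\<Prod>c\<in>?C. ht k T R V c a i)"
  have "\<nu> \<notin> ?C" using childrenD by blast
  have below_child: "\<rho> \<noteq> \<nu> \<and> \<rho> \<notin> ?C" if "c \<in> ?C" "\<rho> \<in> subtree T c - {c}" for c \<rho>
    using that childrenD[OF that(1)] children_maximal[of \<rho> T \<nu> c] unfolding subtree_def by blast
  have W'_child: "ht k T R ?W' c a i = ht k T R W c a i" if "c \<in> ?C" "a \<noteq> r" for c a
    using that childrenD[OF that(1)] below_child[OF that(1)] \<open>\<nu> \<notin> ?C\<close>
    by (intro ht_cong_column) (auto simp: zero_component_def weights_away_from_component)
  have Wc_child: "ht k T R ?Wc c r i = ht k T R W c r i" if "c \<in> ?C" for c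
    using that childrenD[OF that(1)] below_child[OF that(1)] \<open>\<nu> \<notin> ?C\<close>
    by (intro ht_cong_column) (auto simp: component_weights_def weights_away_from_component)
  \<comment> \<open>only the summand a = r differs, and it is exactly the summand kept by ?Wc\<close>
  have "?term W a - ?term ?W' a = ?term ?Wc a" for a
    using \<open>\<nu> \<notin> ?C\<close> W'_child Wc_child
    by (cases "a = r") (simp_all add: zero_component_def component_weights_def)
  then have "(\<Sum>a<R \<nu>. ?term W a) - (\<Sum>a<R \<nu>. ?term ?W' a) = (\<Sum>a<R \<nu>. ?term ?Wc a)"
    by (simp only: sum_subtractf[symmetric])
  then show ?thesis using assms(2) by (simp add: interior_def)
qed

lemma ht_Suc_sub_through_child:
  assumes "\<not> is_singleton \<mu>" "finite (children T \<mu>)" "c0 \<in> children T \<mu>"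
    and "V' \<mu> = V \<mu>" "V'' \<mu> = V \<mu>"
    and "\<And>c a. c \<in> children T \<mu> - {c0} \<Longrightarrow>
           ht k T R V' c a i = ht k T R V c a i \<and> ht k T R V'' c a i = ht k T R V c a i"
    and "\<And>a. ht k T R V c0 a i - ht k T R V' c0 a i = ht k T R V'' c0 a i"
  shows "ht (Suc k) T R V \<mu> b i - ht (Suc k) T R V' \<mu> b i = ht (Suc k) T R V'' \<mu> b i"
proof -
  let ?others = "\<lambda>U a. \<Prod>c\<in>children T \<mu> - {c0}. ht k T R U c a i"
  have split: "(\<Prod>c\<in>children T \<mu>. ht k T R U c a i) = ht k T R U c0 a i * ?others U a" for U a
    using prod.remove[OF assms(2,3)] .
  have "?others V' a = ?others V a" "?others V'' a = ?others V a" for a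
    using assms(6) by (auto intro: prod.cong)
  then have "V \<mu> a b * (\<Prod>c\<in>children T \<mu>. ht k T R V c a i)
      - V' \<mu> a b * (\<Prod>c\<in>children T \<mu>. ht k T R V' c a i)
      = V'' \<mu> a b * (\<Prod>c\<in>children T \<mu>. ht k T R V'' c a i)" for a
    unfolding split assms(4,5) assms(7)[symmetric] by (simp add: algebra_simps)
  then show ?thesis using assms(1) by (simp add: sum_subtractf[symmetric])
qed

lemma ht_disjoint_from_component:
  assumes "mode_tree N T" "interior T \<nu>" "\<sigma> \<in> T" "\<sigma> \<inter> \<nu> = {}"
  shows "ht k T R (zero_component T W \<nu> r) \<sigma> b i = ht k T R W \<sigma> b i"
    and "ht k T R (component_weights T W \<nu> r) \<sigma> b i = ht k T R W \<sigma> b i"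
proof -
  have "\<rho> \<noteq> \<nu> \<and> \<rho> \<notin> children T \<nu>" if "\<rho> \<in> subtree T \<sigma>" for \<rho>
  proof -
    have "\<rho> \<in> T" "\<rho> \<inter> \<nu> = {}" using that assms(4) unfolding subtree_def by auto
    moreover have "\<rho> \<noteq> {}" "\<nu> \<noteq> {}"
      using mode_tree_nodeD(1)[OF assms(1)] \<open>\<rho> \<in> T\<close> assms(2) unfolding interior_def by auto
    ultimately show ?thesis using childrenD[of \<rho> T \<nu>] by blast
  qed
  then show "ht k T R (zero_component T W \<nu> r) \<sigma> b i = ht k T R W \<sigma> b i"
    and "ht k T R (component_weights T W \<nu> r) \<sigma> b i = ht k T R W \<sigma> b i"
    using assms(3) by (auto intro: ht_cong_weights simp: weights_away_from_component)
qed

lemma ht_sub_zero_component: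
  assumes "mode_tree N T" "interior T \<nu>" "\<mu> \<in> T" "\<nu> \<subseteq> \<mu>"
  shows "ht k T R W \<mu> b i - ht k T R (zero_component T W \<nu> r) \<mu> b i
       = ht k T R (component_weights T W \<nu> r) \<mu> b i"
  using assms(3,4)
proof (induction k arbitrary: \<mu> b)
  case (Suc k)
  show ?case
  proof (cases "\<mu> = \<nu>")
    case True
    then show ?thesis using ht_sub_zero_component_at_node[OF assms(1,2)] by simp
  next
    case False
    have "\<nu> \<noteq> {}" using assms(2) mode_tree_nodeD(1)[OF assms(1)] by (simp add: interior_def)
    have "\<nu> \<subset> \<mu>" using False Suc.prems(2) by blast
    then obtain c0 where c0: "c0 \<in> children T \<mu>" "\<nu> \<subseteq> c0"
      using exists_child_above[OF assms(1)] assms(2) unfolding interior_def by blast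
    have "\<not> is_singleton \<mu>"
      using \<open>\<nu> \<subset> \<mu>\<close> \<open>\<nu> \<noteq> {}\<close> by (auto simp: is_singleton_def)
    have other_children: "ht k T R V c a i = ht k T R W c a i"
      if "c \<in> children T \<mu> - {c0}" "V \<in> {zero_component T W \<nu> r, component_weights T W \<nu> r}" for c a V
    proof -
      have "c \<in> T" "c \<inter> \<nu> = {}"
        using that(1) childrenD children_disjoint[OF assms(1), of c \<mu> c0] c0 by blast+
      then show ?thesis using that(2) ht_disjoint_from_component[OF assms(1,2)] by blast
    qed
    show ?thesis
    proof (rule ht_Suc_sub_through_child[OF \<open>\<not> is_singleton \<mu>\<close> finite_children[OF assms(1)] c0(1)])
      show "zero_component T W \<nu> r \<mu> = W \<mu>" "component_weights T W \<nu> r \<mu> = W \<mu>"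
        using \<open>\<nu> \<subset> \<mu>\<close> childrenD by (auto intro!: weights_away_from_component)
      show "ht k T R W c0 a i - ht k T R (zero_component T W \<nu> r) c0 a i
          = ht k T R (component_weights T W \<nu> r) c0 a i" for a
        using childrenD[OF c0(1)] c0(2) by (intro Suc.IH) auto
    qed (use other_children in blast)
  qed
qed simp

lemma end_tensor_sub_zero_component:
  assumes "mode_tree N T" "interior T \<nu>"
  shows "end_tensor N T R W i - end_tensor N T R (zero_component T W \<nu> r) i
       = end_tensor N T R (component_weights T W \<nu> r) i"
proof -
  have "{1..N} \<in> T" "\<nu> \<subseteq> {1..N}"
    using assms mode_tree_nodeD(2)[OF assms(1)] unfolding mode_tree_def interior_def by auto
  then show ?thesis
    unfolding end_tensor_def inter_tensor_def by (rule ht_sub_zero_component[OF assms])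
qed

lemma mat_norm_component_weights:
  assumes "mode_tree N T" "interior T \<nu>" "r < R \<nu>"
  shows "mat_norm N T D R (component_weights T W \<nu> r) \<nu> = row_norm N T D R W \<nu> r"
    and "c \<in> children T \<nu> \<Longrightarrow> mat_norm N T D R (component_weights T W \<nu> r) c = col_norm D R W c r"
    and "\<sigma> \<noteq> \<nu> \<Longrightarrow> \<sigma> \<notin> children T \<nu> \<Longrightarrow>
           mat_norm N T D R (component_weights T W \<nu> r) \<sigma> = mat_norm N T D R W \<sigma>"
proof -
  have "\<nu> \<notin> children T \<nu>" using childrenD by blast
  then have "(\<Sum>a<rows D R \<nu>. \<Sum>b<cols N T D R \<nu>. (component_weights T W \<nu> r \<nu> a b)\<^sup>2)
      = (\<Sum>a<R \<nu>. if a = r then (\<Sum>b<cols N T D R \<nu>. (W \<nu> r b)\<^sup>2) else 0)"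
    using assms(2) by (intro sum.cong) (auto simp: component_weights_def rows_def interior_def)
  also have "\<dots> = (\<Sum>b<cols N T D R \<nu>. (W \<nu> r b)\<^sup>2)"
    using assms(3) by simp
  finally show "mat_norm N T D R (component_weights T W \<nu> r) \<nu> = row_norm N T D R W \<nu> r"
    by (simp add: mat_norm_def row_norm_def)
next
  assume c: "c \<in> children T \<nu>"
  then have "c \<noteq> \<nu>" using childrenD by blast
  then have "(\<Sum>a<rows D R c. \<Sum>b<cols N T D R c. (component_weights T W \<nu> r c a b)\<^sup>2)
      = (\<Sum>a<rows D R c. \<Sum>b<R \<nu>. if b = r then (W c a r)\<^sup>2 else 0)"
    using c unfolding cols_child[OF assms(1,2) c] by (intro sum.cong) (auto simp: component_weights_def)
  also have "\<dots> = (\<Sum>a<rows D R c. (W c a r)\<^sup>2)"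
    using assms(3) by simp
  finally show "mat_norm N T D R (component_weights T W \<nu> r) c = col_norm D R W c r"
    by (simp add: mat_norm_def col_norm_def)
next
  assume "\<sigma> \<noteq> \<nu>" "\<sigma> \<notin> children T \<nu>"
  then show "mat_norm N T D R (component_weights T W \<nu> r) \<sigma> = mat_norm N T D R W \<sigma>"
    by (simp add: mat_norm_def weights_away_from_component)
qed

theorem lemma15:
  fixes N :: nat and D :: "nat \<Rightarrow> nat" and T :: "nat set set"
    and R :: "nat set \<Rightarrow> nat" and W :: "nat set \<Rightarrow> nat \<Rightarrow> nat \<Rightarrow> real"
    and \<nu> :: "nat set" and r :: nat
  assumes "N \<ge> 1"
    and "\<forall>n\<in>{1..N}. D n \<ge> 1"
    and "mode_tree N T"
    and "\<forall>\<mu>. interior T \<mu> \<longrightarrow> R \<mu> \<ge> 1"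
    and "interior T \<nu>"
    and "r < R \<nu>"
  shows "tensor_norm N D (\<lambda>i. end_tensor N T R W i
                              - end_tensor N T R (zero_component T W \<nu> r) i)
         \<le> local_norm N T D R W \<nu> r *
            (\<Prod>\<nu>'\<in>T - ({\<nu>} \<union> children T \<nu>). mat_norm N T D R W \<nu>')"
proof -
  let ?C = "children T \<nu>"
  let ?M = "mat_norm N T D R (component_weights T W \<nu> r)"
  have "{\<nu>} \<union> ?C \<subseteq> T" "\<nu> \<notin> ?C" using assms(5) childrenD by (auto simp: interior_def)
  have "tensor_norm N D (\<lambda>i. end_tensor N T R W i - end_tensor N T R (zero_component T W \<nu> r) i)
      = tensor_norm N D (end_tensor N T R (component_weights T W \<nu> r))"
    by (simp add: end_tensor_sub_zero_component[OF assms(3,5)])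
  also have "\<dots> \<le> (\<Prod>\<sigma>\<in>T. ?M \<sigma>)"
    by (rule tensor_norm_end_tensor_le[OF assms(3)])
  also have "\<dots> = (\<Prod>\<sigma>\<in>T - ({\<nu>} \<union> ?C). ?M \<sigma>) * (\<Prod>\<sigma>\<in>{\<nu>} \<union> ?C. ?M \<sigma>)"
    using prod.subset_diff[OF \<open>{\<nu>} \<union> ?C \<subseteq> T\<close> finite_mode_tree[OF assms(3)]] .
  also have "(\<Prod>\<sigma>\<in>{\<nu>} \<union> ?C. ?M \<sigma>) = local_norm N T D R W \<nu> r"
    using \<open>\<nu> \<notin> ?C\<close> finite_children[OF assms(3)]
    by (simp add: local_norm_def mat_norm_component_weights[where R = R, OF assms(3,5,6)])
  also have "(\<Prod>\<sigma>\<in>T - ({\<nu>} \<union> ?C). ?M \<sigma>) = (\<Prod>\<sigma>\<in>T - ({\<nu>} \<union> ?C). mat_norm N T D R W \<sigma>)"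
    by (intro prod.cong refl mat_norm_component_weights(3)[where R = R, OF assms(3,5,6)]) auto
  finally show ?thesis by (simp only: mult.commute)
qed

end
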